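(* Let $n\ge 1$. There is a one-to-one correspondence between the families of spherical simplices generating the reflection group $A_n$ (families considered up to isometry) and the trees with $n+1$ vertices (considered up to isomorphism). The correspondence is given as follows: realize the family by unit normal vectors $\pm f_1,\dots,\pm f_n$ which, suitably normalized, lie in the root system $\Delta(A_n)=\{\pm(h_i-h_j): 0\le i<j\le n\}$, where $h_0,\dots,h_n$ is the standard basis of $\mathbb{R}^{n+1}$; the associated graph has vertices $v_0,\dots,v_n$ (corresponding to $h_0,\dots,h_n$), with $v_i$ and $v_j$ joined by an edge iff $\pm(h_i-h_j)$ is one of the $f_k$. The correspondence is well defined and is a bijection onto the set of trees with $n+1$ vertices.
   Context: A spherical simplex in $S^{m}\subset\mathbb{R}^{m+1}$ is determined by $m+1$ linearly independent unit vectors $f_1,\dots,f_{m+1}$ (outer normals to its facets). The $m+1$ hyperplanes $f_i^\perp$ cut $S^m$ into $2^{m+1}$ simplices, encoded by the vectors $\pm f_1,\dots,\pm f_{m+1}$; this set of simplices is called a family. All simplices of a family generate the same group, generated by the reflections in the hyperplanes $f_i^\perp$; a family generates a reflection group $G$ if this group is $G$ (up to conjugation by an orthogonal transformation). $A_n$ denotes the finite Coxeter (Weyl) group of type $A_n$, acting on the $n$-dimensional subspace $\{\sum x_i=0\}$ of $\mathbb{R}^{n+1}$, so the relevant simplices are $(n-1)$-dimensional. *)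

theory Defs
  imports "HOL-Analysis.Analysis"
begin

text \<open>Ambient space R^(n+1) is real^'i with CARD('i) = n+1; h_i = axis i 1.
  V is the hyperplane of vectors with coordinate sum 0.\<close>

definition hyperplaneV :: "(real^'i::finite) set" where
  "hyperplaneV = {x. (\<Sum>i\<in>UNIV. x $ i) = 0}"

text \<open>A family of spherical simplices in the unit sphere of V: the set of vectors
  +-f_1,...,+-f_n for n = dim V linearly independent unit vectors f_k in V.\<close>

definition is_family :: "(real^'i::finite) set \<Rightarrow> bool" where
  "is_family F \<longleftrightarrow> (\<exists>B. independent B \<and> card B = CARD('i) - 1 \<and>
      (\<forall>f\<in>B. norm f = 1 \<and> f \<in> hyperplaneV) \<and> F = B \<union> uminus ` B)"

definition reflection_along :: "(real^'i::finite) \<Rightarrow> real^'i \<Rightarrow> real^'i" where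
  "reflection_along f x = x - (2 * (x \<bullet> f) / (f \<bullet> f)) *\<^sub>R f"

text \<open>Group generated by the reflections in the hyperplanes f-perp, f in F
  (reflections are involutions, so the generated monoid is the generated group).\<close>

inductive_set refl_group :: "(real^'i::finite) set \<Rightarrow> (real^'i \<Rightarrow> real^'i) set"
  for F where
  id_in: "id \<in> refl_group F"
| step: "f \<in> F \<Longrightarrow> g \<in> refl_group F \<Longrightarrow> reflection_along f \<circ> g \<in> refl_group F"

text \<open>The Weyl group A_n: permutations of coordinates (acting on V, and trivially on
  the orthogonal line spanned by (1,...,1)).\<close>

definition weyl_A :: "((real^'i::finite) \<Rightarrow> real^'i) set" where
  "weyl_A = {(\<lambda>x. \<chi> i. x $ (\<sigma> i)) | \<sigma>. \<sigma> permutes (UNIV :: 'i set)}"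

definition isometry_V :: "((real^'i::finite) \<Rightarrow> real^'i) \<Rightarrow> bool" where
  "isometry_V Q \<longleftrightarrow> orthogonal_transformation Q \<and> Q ` hyperplaneV = hyperplaneV"

definition generates_A :: "(real^'i::finite) set \<Rightarrow> bool" where
  "generates_A F \<longleftrightarrow>
     (\<exists>Q. isometry_V Q \<and> (\<lambda>g. Q \<circ> g \<circ> inv Q) ` refl_group F = weyl_A)"

definition family_isometric :: "(real^'i::finite) set \<Rightarrow> (real^'i) set \<Rightarrow> bool" where
  "family_isometric F F' \<longleftrightarrow> (\<exists>Q. isometry_V Q \<and> Q ` F = F')"

definition root_vec :: "'i::finite \<Rightarrow> 'i \<Rightarrow> real^'i" where
  "root_vec i j = (1 / sqrt 2) *\<^sub>R (axis i 1 - axis j 1)"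

definition root_realized :: "(real^'i::finite) set \<Rightarrow> bool" where
  "root_realized F \<longleftrightarrow> F \<subseteq> {root_vec i j | i j. i \<noteq> j}"

definition graph_of :: "(real^'i::finite) set \<Rightarrow> 'i \<Rightarrow> 'i \<Rightarrow> bool" where
  "graph_of F i j \<longleftrightarrow> i \<noteq> j \<and> root_vec i j \<in> F"

definition corresponds :: "(real^'i::finite) set \<Rightarrow> ('i \<Rightarrow> 'i \<Rightarrow> bool) \<Rightarrow> bool" where
  "corresponds F T \<longleftrightarrow>
     (\<exists>Q. isometry_V Q \<and> root_realized (Q ` F) \<and> T = graph_of (Q ` F))"

definition has_cycle :: "('i \<Rightarrow> 'i \<Rightarrow> bool) \<Rightarrow> bool" where
  "has_cycle E \<longleftrightarrow> (\<exists>cs. length cs \<ge> 3 \<and> distinct cs \<and>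
      (\<forall>k. Suc k < length cs \<longrightarrow> E (cs ! k) (cs ! Suc k)) \<and> E (last cs) (hd cs))"

definition is_tree :: "('i \<Rightarrow> 'i \<Rightarrow> bool) \<Rightarrow> bool" where
  "is_tree E \<longleftrightarrow> symp E \<and> irreflp E \<and> (\<forall>u v. E\<^sup>*\<^sup>* u v) \<and> \<not> has_cycle E"

definition graph_iso :: "('i \<Rightarrow> 'i \<Rightarrow> bool) \<Rightarrow> ('i \<Rightarrow> 'i \<Rightarrow> bool) \<Rightarrow> bool" where
  "graph_iso E E' \<longleftrightarrow> (\<exists>\<pi>. bij \<pi> \<and> (\<forall>u v. E u v \<longleftrightarrow> E' (\<pi> u) (\<pi> v)))"

end

(* After conjugation, the reflections of a family generating A_n are coordinate
   transpositions, so its normals are roots (h_i - h_j)/sqrt 2 and it defines a graph on the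
   coordinates. For a set of roots closed under negation, a vector that is constant on the
   components of the graph is orthogonal to all of them; hence the roots span V exactly when
   the graph is connected, and a root lies in the span of the other roots exactly when its
   edge can be bypassed, i.e. lies on a cycle. So n independent roots spanning V are the
   edges of a tree, and the edges of a tree form such a family.
   An isometry between two root realizations maps every root to a root, since the
   reflection in any root is a product of reflections of the family. For n >= 2 such an
   isometry maps the projections of h_0, ..., h_n to V to the same projections, permuted and
   up to a common sign, so it is induced by a tree isomorphism; conversely, coordinate
   permutations realize tree isomorphisms. *)

theory Submission
  imports Defs "HOL-Library.Transitive_Closure_Table"
begin

section \<open>Coordinate permutations and the root system\<close>

definition coord_perm :: "('i::finite \<Rightarrow> 'i) \<Rightarrow> real^'i \<Rightarrow> real^'i" where
  "coord_perm \<sigma> x = (\<chi> i. x $ \<sigma> i)"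

lemma coord_perm_nth [simp]: "coord_perm \<sigma> x $ i = x $ \<sigma> i"
  by (simp add: coord_perm_def)

lemma coord_perm_comp: "coord_perm \<tau> \<circ> coord_perm \<sigma> = coord_perm (\<sigma> \<circ> \<tau>)"
  by (simp add: fun_eq_iff vec_eq_iff)

lemma coord_perm_id: "coord_perm id = id"
  by (simp add: fun_eq_iff vec_eq_iff)

lemma weyl_A_eq: "weyl_A = coord_perm ` {\<sigma>. \<sigma> permutes UNIV}"
  by (auto simp: weyl_A_def coord_perm_def[abs_def])

lemma sum_coord_perm:
  assumes "\<sigma> permutes UNIV"
  shows "(\<Sum>i\<in>UNIV. coord_perm \<sigma> x $ i) = (\<Sum>i\<in>UNIV. x $ i)"
  by (simp add: sum.permute[OF assms, of "($) x"])

lemma isometry_V_coord_perm: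
  assumes \<sigma>: "\<sigma> permutes UNIV"
  shows "isometry_V (coord_perm \<sigma>)"
proof -
  have "linear (coord_perm \<sigma>)"
    by (rule linearI) (simp_all add: vec_eq_iff)
  moreover have "coord_perm \<sigma> x \<bullet> coord_perm \<sigma> y = x \<bullet> y" for x y
    using sum.permute[OF \<sigma>, of "\<lambda>i. x $ i * y $ i"] by (simp add: inner_vec_def comp_def)
  ultimately have "orthogonal_transformation (coord_perm \<sigma>)"
    by (simp add: orthogonal_transformation_def)
  moreover have "coord_perm \<sigma> ` hyperplaneV = hyperplaneV"
  proof -
    have V: "coord_perm \<tau> x \<in> hyperplaneV \<longleftrightarrow> x \<in> hyperplaneV" if "\<tau> permutes UNIV" for \<tau> x
      using sum_coord_perm[OF that] by (simp add: hyperplaneV_def)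
    have "x = coord_perm \<sigma> (coord_perm (inv \<sigma>) x)" for x
      using permutes_inverses(2)[OF \<sigma>] by (simp add: vec_eq_iff)
    then show ?thesis
      using V[OF \<sigma>] V[OF permutes_inv[OF \<sigma>]] by (auto intro: image_eqI)
  qed
  ultimately show ?thesis
    by (simp add: isometry_V_def)
qed

definition root_system :: "(real^'i::finite) set" where
  "root_system = {root_vec i j | i j. i \<noteq> j}"

lemma root_realized_iff: "root_realized F \<longleftrightarrow> F \<subseteq> root_system"
  by (simp add: root_realized_def root_system_def)

lemma root_vec_nth:
  "root_vec i j $ k = (if k = i then 1 / sqrt 2 else 0) - (if k = j then 1 / sqrt 2 else 0)"
  by (simp add: root_vec_def axis_def)

lemma uminus_root_vec [simp]: "- root_vec i j = root_vec j i"
  by (simp add: root_vec_def algebra_simps)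

lemma root_vec_same [simp]: "root_vec i i = 0"
  by (simp add: root_vec_def)

lemma root_vec_add: "root_vec i j + root_vec j k = root_vec i k"
  by (simp add: root_vec_def algebra_simps)

lemma inner_root_vec: "x \<bullet> root_vec i j = (x $ i - x $ j) / sqrt 2"
  by (simp add: root_vec_def inner_diff_right inner_axis diff_divide_distrib)

lemma norm_root_vec: "i \<noteq> j \<Longrightarrow> norm (root_vec i j) = 1"
  by (simp add: norm_eq_sqrt_inner inner_root_vec root_vec_nth)

lemma root_vec_in_hyperplaneV: "root_vec i j \<in> hyperplaneV"
  by (simp add: hyperplaneV_def root_vec_nth sum_subtractf)

lemma root_vec_eq_iff:
  assumes "i \<noteq> j"
  shows "root_vec i j = root_vec k l \<longleftrightarrow> i = k \<and> j = l"
proof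
  assume "root_vec i j = root_vec k l"
  then have "root_vec i j $ i = root_vec k l $ i" "root_vec i j $ j = root_vec k l $ j"
    by simp_all
  then show "i = k \<and> j = l"
    using assms by (auto simp: root_vec_nth split: if_splits)
qed simp

lemma root_vec_in_root_system: "i \<noteq> j \<Longrightarrow> root_vec i j \<in> root_system"
  by (auto simp: root_system_def)

lemma norm_root_system: "r \<in> root_system \<Longrightarrow> norm r = 1"
  by (auto simp: root_system_def norm_root_vec)

lemma finite_root_system: "finite root_system"
proof -
  have "root_system \<subseteq> (\<lambda>(i, j). root_vec i j) ` UNIV"
    by (auto simp: root_system_def)
  then show ?thesis
    by (rule finite_subset) simp
qed

lemma coord_perm_root_vec:
  assumes "bij \<pi>"
  shows "coord_perm (inv \<pi>) (root_vec u v) = root_vec (\<pi> u) (\<pi> v)"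
proof -
  have "inv \<pi> i = w \<longleftrightarrow> i = \<pi> w" for i w
    using assms by (metis bij_inv_eq_iff)
  then show ?thesis
    by (simp add: vec_eq_iff root_vec_nth)
qed

lemma hyperplaneV_eq: "hyperplaneV = {x. (\<chi> i. 1) \<bullet> x = 0}"
  by (simp add: hyperplaneV_def inner_vec_def)

lemma dim_hyperplaneV: "dim (hyperplaneV :: (real^'i::finite) set) = CARD('i) - 1"
proof -
  have "(\<chi> i. (1::real)) \<noteq> (0 :: real^'i)"
    by (simp add: vec_eq_iff)
  then show ?thesis
    unfolding hyperplaneV_eq by (simp add: dim_hyperplane)
qed

lemma hyperplaneV_subset_span:
  assumes "\<And>u v. root_vec u v \<in> span S"
  shows "hyperplaneV \<subseteq> span S"
proof
  fix x :: "real^'a"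
  assume x: "x \<in> hyperplaneV"
  obtain a :: 'a where True by simp
  have "x = (\<Sum>c\<in>UNIV. (x $ c) *\<^sub>R axis c 1) - (\<Sum>c\<in>UNIV. x $ c) *\<^sub>R axis a 1"
    using x by (simp add: hyperplaneV_def basis_expansion[of x, unfolded scalar_mult_eq_scaleR])
  also have "\<dots> = (\<Sum>c\<in>UNIV. (sqrt 2 * x $ c) *\<^sub>R root_vec c a)"
    by (simp add: root_vec_def scaleR_diff_right sum_subtractf scaleR_sum_left)
  also have "\<dots> \<in> span S"
    by (intro span_sum span_scale assms)
  finally show "x \<in> span S" .
qed

section \<open>Reflections and reflection groups\<close>

lemma reflection_along_unit: "norm f = 1 \<Longrightarrow> reflection_along f x = x - (2 * (x \<bullet> f)) *\<^sub>R f"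
  by (simp add: reflection_along_def dot_square_norm)

lemma reflection_along_root_vec:
  assumes "a \<noteq> b"
  shows "reflection_along (root_vec a b) = coord_perm (Transposition.transpose a b)"
proof
  fix x :: "real^'a"
  have r: "root_vec a b $ k = ((if k = a then 1 else 0) - (if k = b then 1 else 0)) / sqrt 2" for k
    by (simp add: root_vec_nth diff_divide_distrib)
  have sqrt2: "2 * (p / sqrt 2) * (q / sqrt 2) = p * q" for p q :: real
    by (simp add: field_simps)
  have "reflection_along (root_vec a b) x $ k
      = x $ k - (x $ a - x $ b) * ((if k = a then 1 else 0) - (if k = b then 1 else 0))" for k
    by (simp only: reflection_along_unit[OF norm_root_vec[OF assms]] inner_root_vec r sqrt2
      vector_minus_component vector_scaleR_component real_scaleR_def)
  then show "reflection_along (root_vec a b) x = coord_perm (Transposition.transpose a b) x"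
    using assms by (auto simp: vec_eq_iff transpose_def)
qed

lemma reflection_along_in_weyl_A: "r \<in> root_system \<Longrightarrow> reflection_along r \<in> weyl_A"
  by (auto simp: root_system_def weyl_A_eq reflection_along_root_vec permutes_swap_id)

lemma reflection_along_conj:
  fixes Q :: "real^'i::finite \<Rightarrow> real^'i"
  assumes Q: "orthogonal_transformation Q"
  shows "Q \<circ> reflection_along f \<circ> inv Q = reflection_along (Q f)"
proof
  fix y
  define x where "x = inv Q y"
  have "surj Q"
    using Q by (rule orthogonal_transformation_surj)
  then have y: "Q x = y"
    unfolding x_def by (rule surj_f_inv_f)
  have lin: "linear Q"
    using Q by (rule orthogonal_transformation_linear)
  have "Q (reflection_along f x) = Q x - (2 * (x \<bullet> f) / (f \<bullet> f)) *\<^sub>R Q f"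
    by (simp add: reflection_along_def linear_diff[OF lin] linear_scale[OF lin])
  also have "\<dots> = reflection_along (Q f) y"
    using Q by (simp add: reflection_along_def orthogonal_transformation_def flip: y)
  finally show "(Q \<circ> reflection_along f \<circ> inv Q) y = reflection_along (Q f) y"
    by (simp add: x_def)
qed

lemma in_root_system_if_reflection_along_eq_coord_perm:
  fixes v :: "real^'i::finite"
  assumes \<sigma>: "\<sigma> permutes UNIV" and refl: "reflection_along v = coord_perm \<sigma>"
    and v: "norm v = 1"
  shows "v \<in> root_system"
proof -
  have "v \<noteq> 0"
    using v by auto
  then obtain a where va: "v $ a \<noteq> 0"
    by (auto simp: vec_eq_iff)
  define b where "b = inv \<sigma> a"
  have "axis b 1 = coord_perm \<sigma> (axis a (1::real))"
    using permutes_inverses[OF \<sigma>] by (auto simp: vec_eq_iff axis_def b_def)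
  also have "\<dots> = axis a 1 - (2 * v $ a) *\<^sub>R v"
    using v by (simp add: refl[symmetric] reflection_along_unit inner_axis')
  finally have "(2 * v $ a) *\<^sub>R v = sqrt 2 *\<^sub>R root_vec a b"
    by (simp add: root_vec_def)
  then have "(1 / (2 * v $ a)) *\<^sub>R (2 * v $ a) *\<^sub>R v = (1 / (2 * v $ a)) *\<^sub>R sqrt 2 *\<^sub>R root_vec a b"
    by simp
  then have vt: "v = (sqrt 2 / (2 * v $ a)) *\<^sub>R root_vec a b"
    using va by simp
  then have ab: "a \<noteq> b"
    using v by auto
  then have "\<bar>sqrt 2 / (2 * v $ a)\<bar> = 1"
    using arg_cong[OF vt, of norm] v by (simp add: norm_root_vec)
  then have "v = root_vec a b \<or> v = - root_vec a b"
    using vt by (auto simp: abs_if split: if_splits)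
  then show ?thesis
    using ab by (auto intro: root_vec_in_root_system)
qed

lemma refl_group_comp:
  assumes "g \<in> refl_group F" "h \<in> refl_group F"
  shows "g \<circ> h \<in> refl_group F"
  using assms(1)
proof (induction rule: refl_group.induct)
  case id_in
  then show ?case
    using assms(2) by simp
next
  case (step f g)
  then show ?case
    using refl_group.step[OF step.hyps(1) step.IH] by (simp only: comp_assoc)
qed

lemma reflection_along_in_refl_group: "f \<in> F \<Longrightarrow> reflection_along f \<in> refl_group F"
  using refl_group.step[OF _ refl_group.id_in] by simp

lemma refl_group_subset_weyl_A:
  assumes "F \<subseteq> root_system"
  shows "refl_group F \<subseteq> weyl_A"
proof
  fix g
  assume "g \<in> refl_group F"
  then show "g \<in> weyl_A"
  proof (induction rule: refl_group.induct)
    case id_in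
    show ?case
      unfolding weyl_A_eq using coord_perm_id permutes_id by (metis image_eqI mem_Collect_eq)
  next
    case (step f g)
    obtain a b where ab: "a \<noteq> b" "f = root_vec a b"
      using step.hyps assms by (auto simp: root_system_def)
    obtain \<sigma> where \<sigma>: "\<sigma> permutes UNIV" "g = coord_perm \<sigma>"
      using step.IH by (auto simp: weyl_A_eq)
    have "reflection_along f \<circ> g = coord_perm (\<sigma> \<circ> Transposition.transpose a b)"
      using ab \<sigma> by (simp add: reflection_along_root_vec coord_perm_comp)
    moreover have "\<sigma> \<circ> Transposition.transpose a b permutes UNIV"
      using \<sigma>(1) by (simp add: permutes_compose permutes_swap_id)
    ultimately show ?case
      by (auto simp: weyl_A_eq)
  qed
qed

lemma coord_perm_transpose_in_refl_group:
  assumes edge: "\<And>c d. E c d \<Longrightarrow> c \<noteq> d \<Longrightarrow> root_vec c d \<in> G" and path: "E\<^sup>*\<^sup>* a d"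
  shows "coord_perm (Transposition.transpose a d) \<in> refl_group G"
  using path
proof (induction rule: rtranclp_induct)
  case base
  show ?case
    unfolding transpose_same coord_perm_id by (rule refl_group.id_in)
next
  case (step c d)
  have cd: "coord_perm (Transposition.transpose c d) \<in> refl_group G" if "c \<noteq> d"
    using reflection_along_in_refl_group[OF edge[OF step.hyps(2) that]]
    by (simp add: reflection_along_root_vec[OF that])
  consider "c = d" | "a = d" | "a = c" "c \<noteq> d" | "a \<noteq> c" "a \<noteq> d" "c \<noteq> d"
    by blast
  then show ?case
  proof cases
    case 1
    then show ?thesis
      using step.IH by simp
  next
    case 2
    show ?thesis
      unfolding 2 transpose_same coord_perm_id by (rule refl_group.id_in)
  next
    case 3
    then show ?thesis
      using cd by simp
  next
    case 4
    have "Transposition.transpose d c \<circ> Transposition.transpose c a \<circ> Transposition.transpose d c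
        = Transposition.transpose d a"
      using 4 by (intro transpose_comp_triple) auto
    then have "coord_perm (Transposition.transpose a d)
        = coord_perm (Transposition.transpose c d) \<circ> coord_perm (Transposition.transpose a c)
          \<circ> coord_perm (Transposition.transpose c d)"
      by (simp add: coord_perm_comp transpose_commute comp_assoc)
    then show ?thesis
      using cd 4 step.IH by (metis refl_group_comp)
  qed
qed

lemma weyl_A_subset_refl_group:
  fixes G :: "(real^'i::finite) set"
  assumes edge: "\<And>c d. E c d \<Longrightarrow> c \<noteq> d \<Longrightarrow> root_vec c d \<in> G"
    and connected: "\<And>u v. E\<^sup>*\<^sup>* u v"
  shows "weyl_A \<subseteq> refl_group G"
proof
  fix g :: "real^'i \<Rightarrow> real^'i"
  assume "g \<in> weyl_A"
  then obtain \<sigma> where \<sigma>: "\<sigma> permutes UNIV" "g = coord_perm \<sigma>"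
    by (auto simp: weyl_A_eq)
  have "coord_perm \<sigma> \<in> refl_group G"
    using \<sigma>(1) finite_class.finite_UNIV
  proof (induction rule: permutes_induct)
    case id
    show ?case
      unfolding coord_perm_id by (rule refl_group.id_in)
  next
    case (swap a b p)
    then show ?case
      using coord_perm_transpose_in_refl_group[OF edge connected]
      by (metis coord_perm_comp refl_group_comp)
  qed
  then show "g \<in> refl_group G"
    using \<sigma>(2) by simp
qed

lemma conj_in_refl_group_image:
  fixes M :: "real^'i::finite \<Rightarrow> real^'i"
  assumes M: "orthogonal_transformation M" and g: "g \<in> refl_group G"
  shows "M \<circ> g \<circ> inv M \<in> refl_group (M ` G)"
  using g
proof (induction rule: refl_group.induct)
  case id_in
  have "M \<circ> id \<circ> inv M = id"
    using orthogonal_transformation_surj[OF M] by (simp add: surj_iff)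
  then show ?case
    by (simp only: refl_group.id_in)
next
  case (step f g)
  have "M \<circ> (reflection_along f \<circ> g) \<circ> inv M = (M \<circ> reflection_along f \<circ> inv M) \<circ> (M \<circ> g \<circ> inv M)"
    using orthogonal_transformation_inj[OF M] by (simp add: fun_eq_iff)
  also have "\<dots> = reflection_along (M f) \<circ> (M \<circ> g \<circ> inv M)"
    by (simp add: reflection_along_conj[OF M])
  finally show ?case
    using refl_group.step[OF imageI[OF step.hyps(1)] step.IH] by (simp only:)
qed

section \<open>Cycles and bypasses\<close>

definition without_edge :: "('a \<Rightarrow> 'a \<Rightarrow> bool) \<Rightarrow> 'a \<Rightarrow> 'a \<Rightarrow> 'a \<Rightarrow> 'a \<Rightarrow> bool" where
  "without_edge E x y u v \<longleftrightarrow> E u v \<and> {u, v} \<noteq> {x, y}"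

lemma symp_without_edge: "symp E \<Longrightarrow> symp (without_edge E x y)"
  by (auto simp: symp_def without_edge_def insert_commute)

lemma bypass_if_has_cycle:
  assumes "has_cycle E"
  shows "\<exists>x y. E x y \<and> (without_edge E x y)\<^sup>*\<^sup>* y x"
proof -
  obtain cs where len: "length cs \<ge> 3" and dist: "distinct cs"
    and steps: "\<And>k. Suc k < length cs \<Longrightarrow> E (cs ! k) (cs ! Suc k)"
    and closing: "E (last cs) (hd cs)"
    using assms unfolding has_cycle_def by blast
  define m where "m = length cs"
  have m: "m \<ge> 3"
    using len by (simp add: m_def)
  have eq_iff: "cs ! k = cs ! l \<longleftrightarrow> k = l" if "k < m" "l < m" for k l
    using dist that by (simp add: m_def nth_eq_iff_index_eq)
  have walk: "(without_edge E (cs ! (m - 1)) (cs ! 0))\<^sup>*\<^sup>* (cs ! 0) (cs ! k)" if "k < m" for k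
    using that
  proof (induction k)
    case 0
    show ?case
      by simp
  next
    case (Suc k)
    have "cs ! k \<noteq> cs ! (m - 1)" "cs ! Suc k \<noteq> cs ! 0"
      using Suc.prems eq_iff[of k "m - 1"] eq_iff[of "Suc k" 0] by auto
    moreover have "cs ! k \<noteq> cs ! 0 \<or> cs ! Suc k \<noteq> cs ! (m - 1)"
      using Suc.prems m eq_iff[of k 0] eq_iff[of "Suc k" "m - 1"] by auto
    ultimately have "{cs ! k, cs ! Suc k} \<noteq> {cs ! (m - 1), cs ! 0}"
      by (auto simp: doubleton_eq_iff)
    then have "without_edge E (cs ! (m - 1)) (cs ! 0) (cs ! k) (cs ! Suc k)"
      using steps Suc.prems by (simp add: without_edge_def m_def)
    then show ?case
      using Suc by (meson Suc_lessD rtranclp.rtrancl_into_rtrancl)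
  qed
  have "cs \<noteq> []"
    using len by auto
  then have "E (cs ! (m - 1)) (cs ! 0)"
    using closing by (simp add: m_def hd_conv_nth last_conv_nth)
  moreover have "m - 1 < m"
    using m by simp
  ultimately show ?thesis
    using walk by blast
qed

lemma has_cycle_if_bypass:
  assumes "irreflp E" and xy: "E x y" and bypass: "(without_edge E x y)\<^sup>*\<^sup>* y x"
  shows "has_cycle E"
proof -
  obtain xs where "rtrancl_path (without_edge E x y) y xs x"
    using bypass by (auto simp: rtranclp_eq_rtrancl_path)
  then obtain zs where path: "rtrancl_path (without_edge E x y) y zs x" and dist: "distinct (y # zs)"
    by (rule rtrancl_path_distinct)
  have "zs \<noteq> []"
    using path xy \<open>irreflp E\<close> by (auto elim: rtrancl_path.cases simp: irreflp_def)
  then have last: "last (y # zs) = x"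
    using path by (simp add: rtrancl_path_last)
  have "length zs \<noteq> 1"
  proof
    assume "length zs = 1"
    then have "zs = [x]"
      using last by (auto simp: length_Suc_conv)
    then show False
      using path by (auto elim!: rtrancl_path.cases simp: without_edge_def insert_commute)
  qed
  moreover have "length zs \<noteq> 0"
    using \<open>zs \<noteq> []\<close> by simp
  ultimately have "length (y # zs) \<ge> 3"
    by (simp only: list.size)
  moreover have "E ((y # zs) ! k) ((y # zs) ! Suc k)" if "Suc k < length (y # zs)" for k
    using rtrancl_path_nth[OF path, of k] that by (simp add: without_edge_def)
  ultimately show ?thesis
    unfolding has_cycle_def using dist last xy by (metis list.sel(1))
qed

section \<open>Graphs of roots\<close>

definition edge_roots :: "('i::finite \<Rightarrow> 'i \<Rightarrow> bool) \<Rightarrow> (real^'i) set" where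
  "edge_roots E = {root_vec c d | c d. E c d}"

lemma root_vec_in_edge_roots: "T i j \<Longrightarrow> root_vec i j \<in> edge_roots T"
  unfolding edge_roots_def by blast

lemma root_vec_in_span_if_rtranclp:
  assumes edge: "\<And>c d. E c d \<Longrightarrow> root_vec c d \<in> span S" and path: "E\<^sup>*\<^sup>* u v"
  shows "root_vec u v \<in> span S"
  using path
proof (induction rule: rtranclp_induct)
  case base
  show ?case
    by (simp add: span_zero)
next
  case (step v w)
  show ?case
    using span_add[OF step.IH edge[OF step.hyps(2)]] by (simp add: root_vec_add)
qed

lemma rtranclp_iff_root_vec_in_span:
  fixes E :: "'i::finite \<Rightarrow> 'i \<Rightarrow> bool"
  assumes "symp E"
  shows "E\<^sup>*\<^sup>* u v \<longleftrightarrow> root_vec u v \<in> span (edge_roots E)"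
proof
  show "root_vec u v \<in> span (edge_roots E)" if "E\<^sup>*\<^sup>* u v"
    by (rule root_vec_in_span_if_rtranclp[OF _ that]) (auto simp: edge_roots_def intro: span_base)
next
  assume uv: "root_vec u v \<in> span (edge_roots E)"
  show "E\<^sup>*\<^sup>* u v"
  proof (rule ccontr)
    assume not_uv: "\<not> E\<^sup>*\<^sup>* u v"
    define x :: "real^'i" where "x = (\<chi> c. if E\<^sup>*\<^sup>* u c then 1 else 0)"
    have "orthogonal x r" if r: "r \<in> edge_roots E" for r
    proof -
      obtain c d where cd: "E c d" "r = root_vec c d"
        using r by (auto simp: edge_roots_def)
      then have "E\<^sup>*\<^sup>* u c \<longleftrightarrow> E\<^sup>*\<^sup>* u d"
        using assms by (meson rtranclp.rtrancl_into_rtrancl sympD)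
      then show ?thesis
        by (simp add: orthogonal_def cd x_def inner_root_vec)
    qed
    then have "orthogonal x (root_vec u v)"
      using orthogonal_to_span[OF uv] by blast
    then show False
      using not_uv by (simp add: orthogonal_def x_def inner_root_vec)
  qed
qed

lemma edge_roots_graph_of:
  assumes "G \<subseteq> root_system"
  shows "edge_roots (graph_of G) = G"
proof
  show "edge_roots (graph_of G) \<subseteq> G"
    by (auto simp: edge_roots_def graph_of_def)
  show "G \<subseteq> edge_roots (graph_of G)"
  proof
    fix r
    assume r: "r \<in> G"
    then obtain c d where "c \<noteq> d" "r = root_vec c d"
      using assms by (auto simp: root_system_def)
    then show "r \<in> edge_roots (graph_of G)"
      using r by (auto simp: edge_roots_def graph_of_def)
  qed
qed

lemma symp_graph_of:
  assumes "\<And>r. r \<in> G \<Longrightarrow> - r \<in> G"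
  shows "symp (graph_of G)"
  using assms by (fastforce simp: symp_def graph_of_def)

lemma irreflp_graph_of: "irreflp (graph_of G)"
  by (simp add: irreflp_def graph_of_def)

lemma span_Un_uminus_image: "span (B \<union> uminus ` B) = span B"
proof
  have "B \<union> uminus ` B \<subseteq> span B"
    by (auto intro: span_base span_neg)
  then show "span (B \<union> uminus ` B) \<subseteq> span B"
    by (rule span_minimal) (rule subspace_span)
  show "span B \<subseteq> span (B \<union> uminus ` B)"
    by (rule span_mono) blast
qed

lemma uminus_closed_Un_uminus_image:
  fixes B :: "'a::group_add set"
  shows "r \<in> B \<union> uminus ` B \<Longrightarrow> - r \<in> B \<union> uminus ` B"
  by (auto simp: image_iff)

lemma connected_graph_of:
  assumes "G \<subseteq> root_system" and "\<And>r. r \<in> G \<Longrightarrow> - r \<in> G" and "hyperplaneV \<subseteq> span G"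
  shows "(graph_of G)\<^sup>*\<^sup>* u v"
proof -
  have "root_vec u v \<in> span G"
    using assms(3) root_vec_in_hyperplaneV by blast
  then show ?thesis
    using rtranclp_iff_root_vec_in_span[OF symp_graph_of[OF assms(2)]] edge_roots_graph_of[OF assms(1)]
    by simp
qed

lemma acyclic_graph_of:
  fixes B :: "(real^'i::finite) set"
  assumes indep: "independent B" and roots: "B \<union> uminus ` B \<subseteq> root_system"
  shows "\<not> has_cycle (graph_of (B \<union> uminus ` B))"
proof
  let ?G = "B \<union> uminus ` B"
  assume "has_cycle (graph_of ?G)"
  then obtain x y where xy: "graph_of ?G x y" and bypass: "(without_edge (graph_of ?G) x y)\<^sup>*\<^sup>* y x"
    using bypass_if_has_cycle by blast
  have "root_vec x y \<in> B \<or> root_vec y x \<in> B"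
    using xy by (auto simp: graph_of_def equation_minus_iff)
  then obtain b0 where b0: "b0 \<in> B" "b0 = root_vec x y \<or> b0 = root_vec y x"
    by blast
  have "root_vec c d \<in> span (B - {b0})" if "without_edge (graph_of ?G) x y c d" for c d
  proof -
    have cd: "c \<noteq> d" "root_vec c d \<in> ?G" "{c, d} \<noteq> {x, y}"
      using that by (auto simp: without_edge_def graph_of_def)
    then have "root_vec c d \<noteq> root_vec x y" "root_vec c d \<noteq> root_vec y x"
      by (auto simp: root_vec_eq_iff)
    then have "root_vec c d \<noteq> b0" "root_vec c d \<noteq> - b0"
      using b0(2) by auto
    then show ?thesis
      using cd(2) by (auto intro: span_base span_neg[OF span_base])
  qed
  then have "root_vec y x \<in> span (B - {b0})"
    using bypass by (rule root_vec_in_span_if_rtranclp)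
  then have "b0 \<in> span (B - {b0})"
    using b0(2) span_neg[of "root_vec y x"] by auto
  then show False
    using indep b0(1) unfolding dependent_def by blast
qed

lemma family_spans_hyperplaneV:
  assumes "is_family F"
  shows "hyperplaneV \<subseteq> span F"
proof -
  obtain B where B: "independent B" "card B = CARD('a) - 1" "B \<subseteq> hyperplaneV"
    and F: "F = B \<union> uminus ` B"
    using assms unfolding is_family_def by blast
  have "hyperplaneV \<subseteq> span B"
    using card_ge_dim_independent[OF B(3,1)] B(2) by (simp add: dim_hyperplaneV)
  then show ?thesis
    by (simp add: F span_Un_uminus_image)
qed

lemma is_tree_graph_of:
  assumes "is_family G" and "G \<subseteq> root_system"
  shows "is_tree (graph_of G)"
proof -
  obtain B where B: "independent B" and G: "G = B \<union> uminus ` B"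
    using assms(1) unfolding is_family_def by blast
  have neg: "\<And>r. r \<in> G \<Longrightarrow> - r \<in> G"
    unfolding G by (rule uminus_closed_Un_uminus_image)
  moreover have "(graph_of G)\<^sup>*\<^sup>* u v" for u v
    using connected_graph_of[OF assms(2) neg family_spans_hyperplaneV[OF assms(1)]] .
  moreover have "\<not> has_cycle (graph_of G)"
    unfolding G by (rule acyclic_graph_of[OF B assms(2)[unfolded G]])
  ultimately show ?thesis
    unfolding is_tree_def using symp_graph_of[OF neg] irreflp_graph_of by blast
qed

lemma edge_roots_subset_root_system: "irreflp T \<Longrightarrow> edge_roots T \<subseteq> root_system"
  by (auto simp: edge_roots_def irreflp_def intro: root_vec_in_root_system)

lemma graph_of_edge_roots:
  assumes "irreflp T"
  shows "graph_of (edge_roots T) = T"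
proof (intro ext)
  fix x y
  show "graph_of (edge_roots T) x y = T x y"
    using assms by (cases "x = y") (auto simp: graph_of_def edge_roots_def irreflp_def root_vec_eq_iff)
qed

lemma refl_group_edge_roots:
  assumes "irreflp T" and connected: "\<And>u v. T\<^sup>*\<^sup>* u v"
  shows "refl_group (edge_roots T) = weyl_A"
proof
  show "refl_group (edge_roots T) \<subseteq> weyl_A"
    using edge_roots_subset_root_system[OF assms(1)] by (rule refl_group_subset_weyl_A)
  show "weyl_A \<subseteq> refl_group (edge_roots T)"
    using connected by (rule weyl_A_subset_refl_group[rotated]) (auto simp: edge_roots_def)
qed

definition oriented_edge_roots :: "('i::finite \<Rightarrow> nat) \<Rightarrow> ('i \<Rightarrow> 'i \<Rightarrow> bool) \<Rightarrow> (real^'i) set" where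
  "oriented_edge_roots ord T = {root_vec i j | i j. T i j \<and> ord i < ord j}"

lemma edge_roots_eq_oriented:
  assumes "symp T" and "irreflp T" and "inj ord"
  shows "edge_roots T = oriented_edge_roots ord T \<union> uminus ` oriented_edge_roots ord T"
proof
  show "edge_roots T \<subseteq> oriented_edge_roots ord T \<union> uminus ` oriented_edge_roots ord T"
  proof
    fix r
    assume "r \<in> edge_roots T"
    then obtain i j where ij: "T i j" "r = root_vec i j"
      by (auto simp: edge_roots_def)
    then have "ord i \<noteq> ord j"
      using assms(2,3) by (auto simp: irreflp_def inj_eq)
    then have "ord i < ord j \<or> ord j < ord i"
      by linarith
    moreover have "T j i"
      using assms(1) ij(1) by (rule sympD)
    ultimately show "r \<in> oriented_edge_roots ord T \<union> uminus ` oriented_edge_roots ord T"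
      using ij unfolding oriented_edge_roots_def by (auto intro!: image_eqI[of _ _ "root_vec j i"])
  qed
  show "oriented_edge_roots ord T \<union> uminus ` oriented_edge_roots ord T \<subseteq> edge_roots T"
    using assms(1) by (auto simp: oriented_edge_roots_def intro!: root_vec_in_edge_roots dest: sympD)
qed

lemma independent_oriented_edge_roots:
  fixes T :: "'i::finite \<Rightarrow> 'i \<Rightarrow> bool"
  assumes tree: "is_tree T"
  shows "independent (oriented_edge_roots ord T)"
proof
  let ?B = "oriented_edge_roots ord T"
  assume "dependent ?B"
  then obtain b0 where b0: "b0 \<in> ?B" "b0 \<in> span (?B - {b0})"
    by (auto simp: dependent_def)
  then obtain x y where xy: "T x y" "ord x < ord y" "b0 = root_vec x y"
    by (auto simp: oriented_edge_roots_def)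
  have symp: "symp T" and irreflp: "irreflp T"
    using tree by (auto simp: is_tree_def)
  have "?B - {b0} \<subseteq> edge_roots (without_edge T x y)"
  proof
    fix r
    assume "r \<in> ?B - {b0}"
    then obtain c d where cd: "T c d" "ord c < ord d" "r = root_vec c d" "r \<noteq> root_vec x y"
      using xy(3) by (auto simp: oriented_edge_roots_def)
    then have "{c, d} \<noteq> {x, y}"
      using xy(2) by (auto simp: doubleton_eq_iff)
    then show "r \<in> edge_roots (without_edge T x y)"
      using cd by (auto simp: edge_roots_def without_edge_def)
  qed
  then have "b0 \<in> span (edge_roots (without_edge T x y))"
    using b0(2) span_mono by blast
  then have "root_vec y x \<in> span (edge_roots (without_edge T x y))"
    using xy(3) span_neg by force
  then have "(without_edge T x y)\<^sup>*\<^sup>* y x"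
    using rtranclp_iff_root_vec_in_span[OF symp_without_edge[OF symp]] by blast
  then have "has_cycle T"
    by (rule has_cycle_if_bypass[OF irreflp xy(1)])
  then show False
    using tree by (simp add: is_tree_def)
qed

lemma is_family_edge_roots:
  fixes T :: "'i::finite \<Rightarrow> 'i \<Rightarrow> bool"
  assumes tree: "is_tree T"
  shows "is_family (edge_roots T)"
proof -
  have symp: "symp T" and irreflp: "irreflp T" and connected: "\<And>u v. T\<^sup>*\<^sup>* u v"
    using tree by (auto simp: is_tree_def)
  obtain ord :: "'i \<Rightarrow> nat" where ord: "inj ord"
    using finite_imp_inj_to_nat_seg[of "UNIV :: 'i set"] by auto
  define B where "B = oriented_edge_roots ord T"
  have indep: "independent B"
    unfolding B_def using tree by (rule independent_oriented_edge_roots)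
  have edge_roots: "edge_roots T = B \<union> uminus ` B"
    unfolding B_def using symp irreflp ord by (rule edge_roots_eq_oriented)
  have unit: "norm b = 1 \<and> b \<in> hyperplaneV" if "b \<in> B" for b
    using that irreflp
    by (auto simp: B_def oriented_edge_roots_def irreflp_def root_vec_in_hyperplaneV intro!: norm_root_vec)
  have "root_vec u v \<in> span (edge_roots T)" for u v
    using connected rtranclp_iff_root_vec_in_span[OF symp] by blast
  then have "hyperplaneV \<subseteq> span (edge_roots T)"
    by (rule hyperplaneV_subset_span)
  then have "hyperplaneV \<subseteq> span B"
    by (simp add: edge_roots span_Un_uminus_image)
  then have "card B = CARD('i) - 1"
    using basis_card_eq_dim[OF _ _ indep, of hyperplaneV] unit by (auto simp: dim_hyperplaneV)
  then show ?thesis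
    unfolding is_family_def using indep unit edge_roots by blast
qed

section \<open>Isometries of V and realizations\<close>

lemma isometry_V_id: "isometry_V (id :: real^'i::finite \<Rightarrow> real^'i)"
  by (simp add: isometry_V_def id_def orthogonal_transformation_id)

lemma isometry_V_comp: "isometry_V P \<Longrightarrow> isometry_V Q \<Longrightarrow> isometry_V (P \<circ> Q)"
  unfolding isometry_V_def by (metis image_comp orthogonal_transformation_compose)

lemma isometry_V_inv:
  fixes Q :: "real^'i::finite \<Rightarrow> real^'i"
  assumes "isometry_V Q"
  shows "isometry_V (inv Q)"
proof -
  have Q: "orthogonal_transformation Q" "Q ` hyperplaneV = hyperplaneV"
    using assms by (auto simp: isometry_V_def)
  then have "inv Q ` hyperplaneV = hyperplaneV"
    using image_inv_f_f[OF orthogonal_transformation_inj[OF Q(1)]] by metis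
  then show ?thesis
    using orthogonal_transformation_inv[OF Q(1)] by (simp add: isometry_V_def)
qed

lemma isometry_V_inj: "isometry_V Q \<Longrightarrow> inj (Q :: real^'i::finite \<Rightarrow> real^'i)"
  by (simp add: isometry_V_def orthogonal_transformation_inj)

lemma is_family_image:
  fixes Q :: "real^'i::finite \<Rightarrow> real^'i"
  assumes Q: "isometry_V Q" and F: "is_family F"
  shows "is_family (Q ` F)"
proof -
  obtain B where B: "independent B" "card B = CARD('i) - 1" "\<forall>f\<in>B. norm f = 1 \<and> f \<in> hyperplaneV"
    and FB: "F = B \<union> uminus ` B"
    using F unfolding is_family_def by blast
  have ot: "orthogonal_transformation Q" and QV: "Q ` hyperplaneV = hyperplaneV"
    using Q by (auto simp: isometry_V_def)
  have lin: "linear Q" and inj: "inj Q"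
    using ot orthogonal_transformation_linear orthogonal_transformation_inj by auto
  have "independent (Q ` B)"
    using linear_independent_injective_image[OF lin B(1)] inj by (simp add: inj_on_subset)
  moreover have "card (Q ` B) = CARD('i) - 1"
    using B(2) inj by (simp add: card_image inj_on_subset)
  moreover have "\<forall>f\<in>Q ` B. norm f = 1 \<and> f \<in> hyperplaneV"
    using B(3) QV orthogonal_transformation_norm[OF ot] by auto
  moreover have "Q ` F = Q ` B \<union> uminus ` (Q ` B)"
    unfolding FB image_Un image_comp using lin by (auto simp: linear_neg)
  ultimately show ?thesis
    unfolding is_family_def by blast
qed

lemma root_realization:
  fixes F :: "(real^'i::finite) set"
  assumes F: "is_family F" and gen: "generates_A F"
  shows "\<exists>Q. isometry_V Q \<and> Q ` F \<subseteq> root_system"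
proof -
  obtain Q where Q: "isometry_V Q" and W: "(\<lambda>g. Q \<circ> g \<circ> inv Q) ` refl_group F = weyl_A"
    using gen unfolding generates_A_def by blast
  have ot: "orthogonal_transformation Q"
    using Q by (simp add: isometry_V_def)
  have "Q f \<in> root_system" if f: "f \<in> F" for f
  proof -
    have "Q \<circ> reflection_along f \<circ> inv Q \<in> weyl_A"
      using W reflection_along_in_refl_group[OF f] by blast
    then obtain \<sigma> where "\<sigma> permutes UNIV" "reflection_along (Q f) = coord_perm \<sigma>"
      by (auto simp: weyl_A_eq reflection_along_conj[OF ot])
    moreover have "norm (Q f) = 1"
      using F f by (auto simp: is_family_def orthogonal_transformation_norm[OF ot])
    ultimately show ?thesis
      by (rule in_root_system_if_reflection_along_eq_coord_perm)
  qed
  then show ?thesis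
    using Q by blast
qed

lemma is_tree_if_corresponds:
  assumes F: "is_family F" and cor: "corresponds F T"
  shows "is_tree T"
proof -
  obtain Q where "isometry_V Q" "Q ` F \<subseteq> root_system" "T = graph_of (Q ` F)"
    using cor by (auto simp: corresponds_def root_realized_iff)
  then show ?thesis
    using is_tree_graph_of is_family_image[OF _ F] by blast
qed

lemma tree_realization:
  fixes T :: "'i::finite \<Rightarrow> 'i \<Rightarrow> bool"
  assumes tree: "is_tree T"
  shows "is_family (edge_roots T) \<and> generates_A (edge_roots T) \<and> corresponds (edge_roots T) T"
proof -
  have irreflp: "irreflp T" and connected: "\<And>u v. T\<^sup>*\<^sup>* u v"
    using tree by (auto simp: is_tree_def)
  have "generates_A (edge_roots T)"
    unfolding generates_A_def using isometry_V_id refl_group_edge_roots[OF irreflp connected] by force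
  moreover have "corresponds (edge_roots T) T"
    unfolding corresponds_def root_realized_iff using isometry_V_id
      edge_roots_subset_root_system[OF irreflp] graph_of_edge_roots[OF irreflp] by force
  ultimately show ?thesis
    using is_family_edge_roots[OF tree] by blast
qed

section \<open>Automorphisms of the root system\<close>

lemma root_system_preserved:
  fixes M :: "real^'i::finite \<Rightarrow> real^'i"
  assumes M: "orthogonal_transformation M" and G: "G \<subseteq> root_system" and G': "G' \<subseteq> root_system"
    and MG: "M ` G = G'" and connected: "\<And>u v. (graph_of G)\<^sup>*\<^sup>* u v"
  shows "M ` root_system = root_system"
proof -
  have "M r \<in> root_system" if r: "r \<in> root_system" for r
  proof -
    have "weyl_A \<subseteq> refl_group G"
      using connected by (rule weyl_A_subset_refl_group[rotated]) (simp add: graph_of_def)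
    then have "M \<circ> reflection_along r \<circ> inv M \<in> refl_group G'"
      using conj_in_refl_group_image[OF M] reflection_along_in_weyl_A[OF r] MG by blast
    then have "reflection_along (M r) \<in> weyl_A"
      using refl_group_subset_weyl_A[OF G'] by (auto simp: reflection_along_conj[OF M])
    then obtain \<sigma> where "\<sigma> permutes UNIV" "reflection_along (M r) = coord_perm \<sigma>"
      by (auto simp: weyl_A_eq)
    moreover have "norm (M r) = 1"
      using r by (simp add: orthogonal_transformation_norm[OF M] norm_root_system)
    ultimately show ?thesis
      by (rule in_root_system_if_reflection_along_eq_coord_perm)
  qed
  then have "M ` root_system \<subseteq> root_system"
    by blast
  moreover have "card (M ` root_system) = card (root_system :: (real^'i) set)"
    using orthogonal_transformation_inj[OF M] by (simp add: card_image inj_on_subset)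
  ultimately show ?thesis
    by (rule card_subset_eq[OF finite_root_system])
qed

definition axis_proj :: "'i::finite \<Rightarrow> real^'i" where
  "axis_proj a = axis a 1 - (1 / real CARD('i)) *\<^sub>R (\<chi> i. 1)"

lemma axis_proj_nth: "axis_proj a $ c = (if c = a then 1 else 0) - 1 / real CARD('i)"
  for a :: "'i::finite"
  by (simp add: axis_proj_def axis_def)

lemma axis_proj_in_hyperplaneV: "axis_proj a \<in> hyperplaneV"
  by (simp add: hyperplaneV_def axis_proj_nth sum_subtractf)

lemma inner_axis_proj_self: "axis_proj a \<bullet> axis_proj a = (real CARD('i) - 1) / real CARD('i)"
  for a :: "'i::finite"
proof -
  have "axis_proj a \<bullet> (\<chi> i. 1) = 0"
    using axis_proj_in_hyperplaneV[of a] by (simp add: hyperplaneV_eq inner_commute)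
  then have "axis_proj a \<bullet> axis_proj a = axis_proj a $ a"
    by (simp add: axis_proj_def[of a] inner_diff_right inner_axis)
  then show ?thesis
    by (simp add: axis_proj_nth field_simps)
qed

lemma root_vec_eq_axis_proj_diff: "root_vec u v = (1 / sqrt 2) *\<^sub>R (axis_proj u - axis_proj v)"
  by (simp add: root_vec_def axis_proj_def)

lemma axis_proj_inj: "axis_proj a = axis_proj b \<Longrightarrow> a = b"
  by (drule arg_cong[of _ _ "\<lambda>x. x $ a"]) (simp add: axis_proj_nth split: if_splits)

lemma axis_proj_neq_uminus:
  assumes "CARD('i::finite) \<ge> 3"
  shows "axis_proj (a::'i) \<noteq> - axis_proj b"
proof
  assume eq: "axis_proj a = - axis_proj b"
  have "card {a, b} \<le> 2"
    by (cases "a = b") simp_all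
  then have "{a, b} \<noteq> UNIV"
    using assms by auto
  then obtain c where "c \<notin> {a, b}"
    by blast
  then show False
    using arg_cong[OF eq, of "\<lambda>x. x $ c"] by (simp add: axis_proj_nth)
qed

lemma sum_axis_proj: "(\<Sum>a\<in>UNIV. axis_proj a) = (0 :: real^'i::finite)"
  by (simp add: vec_eq_iff axis_proj_nth sum_subtractf)

lemma sum_scaleR_axis_proj_eq_0_imp_const:
  fixes t :: "'i::finite \<Rightarrow> real"
  assumes "(\<Sum>c\<in>UNIV. t c *\<^sub>R axis_proj c) = 0"
  shows "t a = t b"
proof -
  have "t d = (\<Sum>c\<in>UNIV. t c) / real CARD('i)" for d
  proof -
    have "0 = (\<Sum>c\<in>UNIV. t c * axis_proj c $ d)"
      using arg_cong[OF assms, of "\<lambda>x. x $ d"] by simp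
    also have "\<dots> = (\<Sum>c\<in>UNIV. (if d = c then t c else 0) - t c / real CARD('i))"
      by (rule sum.cong) (simp_all add: axis_proj_nth right_diff_distrib)
    also have "\<dots> = (\<Sum>c\<in>UNIV. (if d = c then t c else 0)) - (\<Sum>c\<in>UNIV. t c / real CARD('i))"
      by (rule sum_subtractf)
    also have "\<dots> = t d - (\<Sum>c\<in>UNIV. t c) / real CARD('i)"
      by (simp add: sum_divide_distrib)
    finally show ?thesis
      by simp
  qed
  then show ?thesis
    by metis
qed

lemma two_valued_vector:
  fixes v :: "real^'i::finite"
  assumes "\<And>c d. v $ c - v $ d \<in> {-1, 0, 1}"
  obtains m S where "\<And>c. v $ c = m + (if c \<in> S then 1 else 0)"
proof -
  have "Min (range (\<lambda>c. v $ c)) \<in> range (\<lambda>c. v $ c)"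
    by (rule Min_in) auto
  then obtain a where a: "v $ a = Min (range (\<lambda>c. v $ c))"
    by (metis (no_types, lifting) imageE)
  have le: "v $ a \<le> v $ c" for c
    unfolding a by (rule Min_le) auto
  have "v $ c = v $ a + (if c \<in> {c. v $ c \<noteq> v $ a} then 1 else 0)" for c
    using assms[of c a] le[of c] by auto
  then show ?thesis
    by (rule that)
qed

lemma two_valued_in_hyperplaneV_card:
  fixes v :: "real^'i::finite"
  assumes V: "v \<in> hyperplaneV" and vS: "\<And>c. v $ c = m + (if c \<in> S then 1 else 0)"
    and norm: "v \<bullet> v = (real CARD('i) - 1) / real CARD('i)"
  shows "real CARD('i) * m = - card S" and "card S = 1 \<or> card S = CARD('i) - 1"
proof -
  define N where "N = real CARD('i)"
  define k where "k = real (card S)"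
  have N: "N > 0"
    by (simp add: N_def)
  have ind: "(\<Sum>c\<in>UNIV. if c \<in> S then x else 0) = x * k" for x :: real
    by (simp add: k_def sum.If_cases)
  have "0 = (\<Sum>c\<in>UNIV. m + (if c \<in> S then 1 else 0))"
    using V by (simp add: hyperplaneV_def vS)
  then show Nm: "real CARD('i) * m = - card S"
    by (simp add: sum.distrib ind N_def k_def)
  have "(N - 1) / N = (\<Sum>c\<in>UNIV. m\<^sup>2 + (if c \<in> S then 2 * m + 1 else 0))"
    using norm by (simp add: N_def inner_vec_def vS power2_eq_square algebra_simps if_distrib cong: if_cong)
  also have "\<dots> = N * m\<^sup>2 + (2 * m + 1) * k"
    by (simp add: sum.distrib ind N_def)
  finally have "N - 1 = (N * m)\<^sup>2 + 2 * (N * m) * k + N * k"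
    using N by (simp add: field_simps power2_eq_square)
  moreover have "N * m = - k"
    using Nm by (simp add: N_def k_def)
  ultimately have "(k - 1) * (N - 1 - k) = 0"
    by (simp add: algebra_simps power2_eq_square)
  moreover have "N - 1 = real (CARD('i) - 1)"
    by (simp add: N_def of_nat_diff Suc_le_eq)
  ultimately have "k = 1 \<or> k = real (CARD('i) - 1)"
    by force
  then show "card S = 1 \<or> card S = CARD('i) - 1"
    unfolding k_def by (metis of_nat_1 of_nat_eq_iff)
qed

lemma eq_axis_proj_if_coord_diffs:
  fixes v :: "real^'i::finite"
  assumes V: "v \<in> hyperplaneV" and diffs: "\<And>c d. v $ c - v $ d \<in> {-1, 0, 1}"
    and norm: "v \<bullet> v = (real CARD('i) - 1) / real CARD('i)"
  shows "\<exists>a. v = axis_proj a \<or> v = - axis_proj a"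
proof -
  obtain m S where vS: "\<And>c. v $ c = m + (if c \<in> S then 1 else 0)"
    using two_valued_vector[OF diffs] by blast
  have N: "real CARD('i) > 0"
    by simp
  note card = two_valued_in_hyperplaneV_card[OF V vS norm]
  consider "card S = 1" | "card S = CARD('i) - 1"
    using card(2) by blast
  then show ?thesis
  proof cases
    case 1
    then obtain a where "S = {a}"
      by (auto simp: card_1_singleton_iff)
    moreover have "m = - 1 / real CARD('i)"
      using card(1) 1 N by (simp add: field_simps)
    ultimately have "v = axis_proj a"
      by (simp add: vec_eq_iff vS axis_proj_nth)
    then show ?thesis
      by blast
  next
    case 2
    then have "card (UNIV - S) = 1"
      by (simp add: card_Diff_subset)
    then obtain b where "UNIV - S = {b}"
      by (auto simp: card_1_singleton_iff)
    then have "c \<in> S \<longleftrightarrow> c \<noteq> b" for c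
      by blast
    moreover have "m = 1 / real CARD('i) - 1"
      using card(1) 2 N by (simp add: field_simps of_nat_diff)
    ultimately have "v = - axis_proj b"
      by (simp add: vec_eq_iff vS axis_proj_nth)
    then show ?thesis
      by blast
  qed
qed

lemma image_axis_proj:
  fixes M :: "real^'i::finite \<Rightarrow> real^'i"
  assumes M: "orthogonal_transformation M" and MV: "M ` hyperplaneV = hyperplaneV"
    and MR: "M ` root_system = root_system"
  shows "\<exists>b. M (axis_proj a) = axis_proj b \<or> M (axis_proj a) = - axis_proj b"
proof -
  define v where "v = M (axis_proj a)"
  have inner: "M x \<bullet> M y = x \<bullet> y" for x y
    using M by (simp add: orthogonal_transformation_def)
  have "v \<in> hyperplaneV"
    using MV axis_proj_in_hyperplaneV unfolding v_def by blast
  moreover have "v $ c - v $ d \<in> {-1, 0, 1}" for c d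
  proof (cases "c = d")
    case False
    then have "root_vec c d \<in> M ` root_system"
      using MR by (simp add: root_vec_in_root_system)
    then obtain c' d' where "root_vec c d = M (root_vec c' d')"
      by (auto simp: root_system_def)
    then have "(v $ c - v $ d) / sqrt 2 = axis_proj a \<bullet> root_vec c' d'"
      by (simp add: v_def inner flip: inner_root_vec)
    then have "v $ c - v $ d = (if c' = a then 1 else 0) - (if d' = a then 1 else 0)"
      by (simp add: inner_root_vec axis_proj_nth)
    then show ?thesis
      by auto
  qed simp
  moreover have "v \<bullet> v = (real CARD('i) - 1) / real CARD('i)"
    by (simp add: v_def inner inner_axis_proj_self)
  ultimately have "\<exists>b. v = axis_proj b \<or> v = - axis_proj b"
    by (rule eq_axis_proj_if_coord_diffs)
  then show ?thesis
    by (simp add: v_def)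
qed

lemma root_system_automorphism_axis_proj:
  fixes M :: "real^'i::finite \<Rightarrow> real^'i"
  assumes M: "orthogonal_transformation M" "M ` hyperplaneV = hyperplaneV" "M ` root_system = root_system"
    and card: "CARD('i) \<ge> 3"
  shows "\<exists>\<pi> s. bij \<pi> \<and> (\<forall>a. s a = 1 \<or> s a = -1)
           \<and> (\<forall>a. M (axis_proj a) = s a *\<^sub>R axis_proj (\<pi> a))"
proof -
  obtain \<pi> where \<pi>: "\<And>a. M (axis_proj a) = axis_proj (\<pi> a) \<or> M (axis_proj a) = - axis_proj (\<pi> a)"
    using image_axis_proj[OF M] by metis
  define s :: "'i \<Rightarrow> real" where "s a = (if M (axis_proj a) = axis_proj (\<pi> a) then 1 else -1)" for a
  have Mp: "M (axis_proj a) = s a *\<^sub>R axis_proj (\<pi> a)" and s: "s a = 1 \<or> s a = -1" for a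
    using \<pi>[of a] by (auto simp: s_def)
  have lin: "linear M" and inj: "inj M"
    using M(1) orthogonal_transformation_linear orthogonal_transformation_inj by auto
  have "inj \<pi>"
  proof (rule injI)
    fix a b
    assume "\<pi> a = \<pi> b"
    then have "M (axis_proj a) = M (axis_proj b) \<or> M (axis_proj a) = M (- axis_proj b)"
      using s[of a] s[of b] by (auto simp: Mp linear_neg[OF lin])
    then have "axis_proj a = axis_proj b \<or> axis_proj a = - axis_proj b"
      using inj by (auto dest: injD)
    then show "a = b"
      using axis_proj_inj axis_proj_neq_uminus[OF card] by blast
  qed
  then have "bij \<pi>"
    by (simp add: bij_def finite_UNIV_inj_surj)
  then show ?thesis
    using Mp s by blast
qed

lemma root_system_automorphism:
  fixes M :: "real^'i::finite \<Rightarrow> real^'i"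
  assumes M: "orthogonal_transformation M" "M ` hyperplaneV = hyperplaneV" "M ` root_system = root_system"
    and card: "CARD('i) \<ge> 3"
  shows "\<exists>\<pi> s. bij \<pi> \<and> (s = 1 \<or> s = -1)
           \<and> (\<forall>u v. M (root_vec u v) = s *\<^sub>R root_vec (\<pi> u) (\<pi> v))"
proof -
  obtain \<pi> s where bij: "bij \<pi>" and s: "\<And>a. s a = 1 \<or> s a = -1"
    and Mp: "\<And>a. M (axis_proj a) = s a *\<^sub>R axis_proj (\<pi> a)"
    using root_system_automorphism_axis_proj[OF M card] by blast
  have lin: "linear M"
    using M(1) by (rule orthogonal_transformation_linear)
  txt \<open>The only linear relation among the vectors \<^term>\<open>axis_proj a\<close> is that they sum to \<open>0\<close>,
    so the signs agree.\<close>
  have "(\<Sum>c\<in>UNIV. s (inv \<pi> c) *\<^sub>R axis_proj c) = (\<Sum>a\<in>UNIV. s a *\<^sub>R axis_proj (\<pi> a))"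
    using sum.reindex_bij_betw[OF bij, of "\<lambda>c. s (inv \<pi> c) *\<^sub>R axis_proj c"] bij_is_inj[OF bij] by simp
  also have "\<dots> = M (\<Sum>a\<in>UNIV. axis_proj a)"
    by (simp add: linear_sum[OF lin] Mp)
  finally have "(\<Sum>c\<in>UNIV. s (inv \<pi> c) *\<^sub>R axis_proj c) = 0"
    by (simp add: sum_axis_proj linear_0[OF lin])
  then have "s (inv \<pi> (\<pi> a)) = s (inv \<pi> (\<pi> b))" for a b
    by (rule sum_scaleR_axis_proj_eq_0_imp_const)
  then have const: "s a = s b" for a b
    using bij_is_inj[OF bij] by simp
  obtain a0 :: 'i where True
    by simp
  have "M (axis_proj a) = s a0 *\<^sub>R axis_proj (\<pi> a)" for a
    using Mp const by metis
  then have "M (root_vec u v) = s a0 *\<^sub>R root_vec (\<pi> u) (\<pi> v)" for u v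
    by (simp add: root_vec_eq_axis_proj_diff linear_scale[OF lin] linear_diff[OF lin] scaleR_diff_right)
  then show ?thesis
    using bij s by blast
qed

section \<open>Isometric families and isomorphic trees\<close>

lemma graph_iso_graph_of_if_image_eq:
  fixes M :: "real^'i::finite \<Rightarrow> real^'i"
  assumes M: "isometry_V M" and G: "G \<subseteq> root_system" and G': "G' \<subseteq> root_system"
    and neg: "\<And>r. r \<in> G' \<Longrightarrow> - r \<in> G'" and MG: "M ` G = G'"
    and connected: "\<And>u v. (graph_of G)\<^sup>*\<^sup>* u v" and card: "CARD('i) \<ge> 3"
  shows "graph_iso (graph_of G) (graph_of G')"
proof -
  have ot: "orthogonal_transformation M" and MV: "M ` hyperplaneV = hyperplaneV"
    using M by (auto simp: isometry_V_def)
  obtain \<pi> s where \<pi>: "bij \<pi>" and s: "s = 1 \<or> s = -1"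
    and Mr: "\<forall>u v. M (root_vec u v) = s *\<^sub>R root_vec (\<pi> u) (\<pi> v)"
    using root_system_automorphism[OF ot MV root_system_preserved[OF ot G G' MG connected] card]
    by blast
  have "root_vec u v \<in> G \<longleftrightarrow> root_vec (\<pi> u) (\<pi> v) \<in> G'" for u v
  proof -
    have "root_vec u v \<in> G \<longleftrightarrow> M (root_vec u v) \<in> G'"
      unfolding MG[symmetric] using orthogonal_transformation_inj[OF ot] by (rule inj_image_mem_iff[symmetric])
    moreover have "M (root_vec u v) \<in> G' \<longleftrightarrow> root_vec (\<pi> u) (\<pi> v) \<in> G'"
      using s
    proof
      assume "s = -1"
      then show ?thesis
        using Mr neg[of "root_vec (\<pi> u) (\<pi> v)"] neg[of "- root_vec (\<pi> u) (\<pi> v)"] by auto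
    qed (simp add: Mr)
    ultimately show ?thesis
      by simp
  qed
  then have "graph_of G u v \<longleftrightarrow> graph_of G' (\<pi> u) (\<pi> v)" for u v
    using bij_is_inj[OF \<pi>] by (auto simp: graph_of_def inj_eq)
  then show ?thesis
    unfolding graph_iso_def using \<pi> by blast
qed

lemma is_tree_card_2:
  assumes "CARD('i::finite) = 2" and tree: "is_tree (T :: 'i \<Rightarrow> 'i \<Rightarrow> bool)"
  shows "T u v \<longleftrightarrow> u \<noteq> v"
proof
  show "T u v \<Longrightarrow> u \<noteq> v"
    using tree by (auto simp: is_tree_def irreflp_def)
next
  assume "u \<noteq> v"
  then have "card {u, v} = CARD('i)"
    using assms(1) by simp
  then have UNIV: "UNIV = {u, v}"
    by (metis card_subset_eq finite_class.finite_UNIV subset_UNIV)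
  have irr: "\<not> T w w" for w
    using tree by (simp add: is_tree_def irreflp_def)
  have "T\<^sup>*\<^sup>* u v"
    using tree by (simp add: is_tree_def)
  then show "T u v"
  proof (cases rule: converse_rtranclpE)
    case (step w)
    then show ?thesis
      using UNIV irr by (metis UNIV_I empty_iff insert_iff)
  qed (use \<open>u \<noteq> v\<close> in simp)
qed

lemma coord_perm_image_eq_if_graph_iso:
  assumes G: "G \<subseteq> root_system" and G': "G' \<subseteq> root_system" and "bij \<pi>"
    and iso: "\<And>u v. graph_of G u v \<longleftrightarrow> graph_of G' (\<pi> u) (\<pi> v)"
  shows "coord_perm (inv \<pi>) ` G = G'"
proof (intro equalityI subsetI)
  fix r
  assume "r \<in> coord_perm (inv \<pi>) ` G"
  then obtain u v where "graph_of G u v" "r = coord_perm (inv \<pi>) (root_vec u v)"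
    using G by (auto simp: root_system_def graph_of_def)
  then show "r \<in> G'"
    using iso coord_perm_root_vec[OF \<open>bij \<pi>\<close>] by (simp add: graph_of_def)
next
  fix r
  assume "r \<in> G'"
  then obtain a b where ab: "graph_of G' a b" "r = root_vec a b"
    using G' by (auto simp: root_system_def graph_of_def)
  obtain u v where "a = \<pi> u" "b = \<pi> v"
    using \<open>bij \<pi>\<close> by (metis bij_pointE)
  then have "graph_of G u v" "r = coord_perm (inv \<pi>) (root_vec u v)"
    using ab iso coord_perm_root_vec[OF \<open>bij \<pi>\<close>] by simp_all
  then show "r \<in> coord_perm (inv \<pi>) ` G"
    by (auto simp: graph_of_def)
qed

lemma family_isometric_if_graph_iso:
  fixes F F' :: "(real^'i::finite) set"
  assumes cor: "corresponds F T" and cor': "corresponds F' T'" and iso: "graph_iso T T'"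
  shows "family_isometric F F'"
proof -
  obtain Q where Q: "isometry_V Q" "Q ` F \<subseteq> root_system" "T = graph_of (Q ` F)"
    using cor by (auto simp: corresponds_def root_realized_iff)
  obtain Q' where Q': "isometry_V Q'" "Q' ` F' \<subseteq> root_system" "T' = graph_of (Q' ` F')"
    using cor' by (auto simp: corresponds_def root_realized_iff)
  obtain \<pi> where \<pi>: "bij \<pi>" "\<And>u v. T u v \<longleftrightarrow> T' (\<pi> u) (\<pi> v)"
    using iso by (auto simp: graph_iso_def)
  define P where "P = coord_perm (inv \<pi>)"
  have "isometry_V P"
    unfolding P_def using \<pi>(1) by (intro isometry_V_coord_perm permutes_inv bij_imp_permutes) auto
  then have "isometry_V (inv Q' \<circ> P \<circ> Q)"
    by (intro isometry_V_comp isometry_V_inv Q(1) Q'(1))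
  moreover have "P ` Q ` F = Q' ` F'"
    unfolding P_def using Q Q' \<pi> by (intro coord_perm_image_eq_if_graph_iso) auto
  then have "(inv Q' \<circ> P \<circ> Q) ` F = F'"
    unfolding image_comp[symmetric] using image_inv_f_f[OF isometry_V_inj[OF Q'(1)]] by simp
  ultimately show ?thesis
    unfolding family_isometric_def by blast
qed

lemma graph_iso_if_family_isometric:
  fixes F F' :: "(real^'i::finite) set"
  assumes card: "CARD('i) \<ge> 2" and F: "is_family F" and F': "is_family F'"
    and cor: "corresponds F T" and cor': "corresponds F' T'" and isom: "family_isometric F F'"
  shows "graph_iso T T'"
proof (cases "CARD('i) = 2")
  case True
  txt \<open>Here \<^term>\<open>axis_proj a = - axis_proj b\<close> for \<^term>\<open>a \<noteq> b\<close>, so the images of the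
    \<^const>\<open>axis_proj\<close> under an isometry do not determine a permutation; but there is only one tree.\<close>
  then have "T u v \<longleftrightarrow> T' (id u) (id v)" for u v
    using is_tree_card_2 is_tree_if_corresponds F F' cor cor' by (metis id_apply)
  then show ?thesis
    unfolding graph_iso_def by blast
next
  case False
  obtain Q where Q: "isometry_V Q" "Q ` F \<subseteq> root_system" "T = graph_of (Q ` F)"
    using cor by (auto simp: corresponds_def root_realized_iff)
  obtain Q' where Q': "isometry_V Q'" "Q' ` F' \<subseteq> root_system" "T' = graph_of (Q' ` F')"
    using cor' by (auto simp: corresponds_def root_realized_iff)
  obtain P where P: "isometry_V P" "P ` F = F'"
    using isom by (auto simp: family_isometric_def)
  have M: "isometry_V (Q' \<circ> P \<circ> inv Q)"
    by (intro isometry_V_comp isometry_V_inv Q(1) Q'(1) P(1))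
  have MG: "(Q' \<circ> P \<circ> inv Q) ` Q ` F = Q' ` F'"
    unfolding image_comp[symmetric] using image_inv_f_f[OF isometry_V_inj[OF Q(1)]] P(2) by simp
  obtain B where B: "Q' ` F' = B \<union> uminus ` B"
    using is_family_image[OF Q'(1) F'] by (auto simp: is_family_def)
  have neg: "\<And>r. r \<in> Q' ` F' \<Longrightarrow> - r \<in> Q' ` F'"
    unfolding B by (rule uminus_closed_Un_uminus_image)
  have connected: "(graph_of (Q ` F))\<^sup>*\<^sup>* u v" for u v
    using is_tree_if_corresponds[OF F cor] Q(3) by (simp add: is_tree_def)
  have "CARD('i) \<ge> 3"
    using card False by simp
  then show ?thesis
    using graph_iso_graph_of_if_image_eq[OF M Q(2) Q'(2) neg MG connected] Q(3) Q'(3) by simp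
qed

theorem theorem1:
  assumes "CARD('i::finite) \<ge> 2"
  shows "(\<forall>F :: (real^'i) set. is_family F \<and> generates_A F \<longrightarrow>
            (\<exists>T. corresponds F T))
       \<and> (\<forall>(F :: (real^'i) set) T. is_family F \<and> generates_A F \<and> corresponds F T \<longrightarrow>
            is_tree T)
       \<and> (\<forall>(F :: (real^'i) set) F' T T'.
            is_family F \<and> generates_A F \<and> is_family F' \<and> generates_A F' \<and>
            corresponds F T \<and> corresponds F' T' \<longrightarrow>
            (family_isometric F F' \<longleftrightarrow> graph_iso T T'))
       \<and> (\<forall>T :: 'i \<Rightarrow> 'i \<Rightarrow> bool. is_tree T \<longrightarrow>
            (\<exists>F :: (real^'i) set. is_family F \<and> generates_A F \<and> corresponds F T))"
proof (intro conjI allI impI)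
  fix F :: "(real^'i) set"
  assume "is_family F \<and> generates_A F"
  then obtain Q where "isometry_V Q" "Q ` F \<subseteq> root_system"
    using root_realization by blast
  then show "\<exists>T. corresponds F T"
    by (auto simp: corresponds_def root_realized_iff)
next
  fix F :: "(real^'i) set" and T
  assume "is_family F \<and> generates_A F \<and> corresponds F T"
  then show "is_tree T"
    using is_tree_if_corresponds by blast
next
  fix F F' :: "(real^'i) set" and T T'
  assume "is_family F \<and> generates_A F \<and> is_family F' \<and> generates_A F' \<and>
            corresponds F T \<and> corresponds F' T'"
  then show "family_isometric F F' \<longleftrightarrow> graph_iso T T'"
    using graph_iso_if_family_isometric[OF assms] family_isometric_if_graph_iso by blast
next
  fix T :: "'i \<Rightarrow> 'i \<Rightarrow> bool"
  assume "is_tree T"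
  then show "\<exists>F :: (real^'i) set. is_family F \<and> generates_A F \<and> corresponds F T"
    using tree_realization by blast
qed

end
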